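(* Under the setting and assumptions in the context, let $N_{AH}=\Pr(R=0,Y=1\mid Z=0)-\Pr(R=0,Y=1\mid Z=1)$ and suppose $N_{AH}\ge 0$ and $\max_{z}\Pr(R=0,Y=1\mid Z=z)>0$. Then $$\frac{N_{AH}}{\min_z\Pr(Y=1\mid Z=z)}\ \le\ APCE_{AH}\ \le\ \frac{N_{AH}}{\max_z\Pr(R=0,Y=1\mid Z=z)},$$ where maxima and minima are over $z\in\{0,1\}$.
   Context: Units are drawn from a population (a probability space). Each unit has a binary assignment $Z\in\{0,1\}$ with $0<\Pr(Z=1)<1$, binary potential recommendations $R(0),R(1)\in\{0,1\}$, and binary potential outcomes $Y(0),Y(1)\in\{0,1\}$ indexed by the recommendation only (exclusion restriction). Observed quantities are $R=R(Z)$ and $Y=Y(R(Z))$. Assumptions: (Randomization) $Z$ is independent of $(R(0),R(1),Y(0),Y(1))$; (Monotonicity) $Y(1)\ge Y(0)$ almost surely. Always High stratum $AH=\{Y(0)=Y(1)=1\}$; $APCE_{AH}=E[R(1)-R(0)\mid AH]$. *)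

theory Defs
  imports "HOL-Probability.Probability"
begin

text \<open>Binary variables are modelled as bool-valued random variables (True = 1, False = 0).\<close>

definition cond_prob :: "'a measure \<Rightarrow> 'a set \<Rightarrow> 'a set \<Rightarrow> real" where
  "cond_prob M A B = measure M (A \<inter> B) / measure M B"

definition cond_exp_event :: "'a measure \<Rightarrow> ('a \<Rightarrow> real) \<Rightarrow> 'a set \<Rightarrow> real" where
  "cond_exp_event M f B = (\<integral>\<omega>. f \<omega> * indicator B \<omega> \<partial>M) / measure M B"

definition obsR :: "('a \<Rightarrow> bool) \<Rightarrow> ('a \<Rightarrow> bool) \<Rightarrow> ('a \<Rightarrow> bool) \<Rightarrow> 'a \<Rightarrow> bool" where
  "obsR Z R0 R1 \<omega> = (if Z \<omega> then R1 \<omega> else R0 \<omega>)"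

definition obsY :: "('a \<Rightarrow> bool) \<Rightarrow> ('a \<Rightarrow> bool) \<Rightarrow> ('a \<Rightarrow> bool)
    \<Rightarrow> ('a \<Rightarrow> bool) \<Rightarrow> ('a \<Rightarrow> bool) \<Rightarrow> 'a \<Rightarrow> bool" where
  "obsY Z R0 R1 Y0 Y1 \<omega> = (if obsR Z R0 R1 \<omega> then Y1 \<omega> else Y0 \<omega>)"

definition AH :: "'a measure \<Rightarrow> ('a \<Rightarrow> bool) \<Rightarrow> ('a \<Rightarrow> bool) \<Rightarrow> 'a set" where
  "AH M Y0 Y1 = {\<omega> \<in> space M. Y0 \<omega> \<and> Y1 \<omega>}"

definition APCE_AH :: "'a measure \<Rightarrow> ('a \<Rightarrow> bool) \<Rightarrow> ('a \<Rightarrow> bool) \<Rightarrow> ('a \<Rightarrow> bool) \<Rightarrow> ('a \<Rightarrow> bool) \<Rightarrow> real" where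
  "APCE_AH M R0 R1 Y0 Y1 =
     cond_exp_event M (\<lambda>\<omega>. of_bool (R1 \<omega>) - of_bool (R0 \<omega>)) (AH M Y0 Y1)"

definition pR0Y1 :: "'a measure \<Rightarrow> ('a \<Rightarrow> bool) \<Rightarrow> ('a \<Rightarrow> bool) \<Rightarrow> ('a \<Rightarrow> bool)
    \<Rightarrow> ('a \<Rightarrow> bool) \<Rightarrow> ('a \<Rightarrow> bool) \<Rightarrow> bool \<Rightarrow> real" where
  "pR0Y1 M Z R0 R1 Y0 Y1 z =
     cond_prob M {\<omega> \<in> space M. \<not> obsR Z R0 R1 \<omega> \<and> obsY Z R0 R1 Y0 Y1 \<omega>}
                 {\<omega> \<in> space M. Z \<omega> = z}"

definition pY1 :: "'a measure \<Rightarrow> ('a \<Rightarrow> bool) \<Rightarrow> ('a \<Rightarrow> bool) \<Rightarrow> ('a \<Rightarrow> bool)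
    \<Rightarrow> ('a \<Rightarrow> bool) \<Rightarrow> ('a \<Rightarrow> bool) \<Rightarrow> bool \<Rightarrow> real" where
  "pY1 M Z R0 R1 Y0 Y1 z =
     cond_prob M {\<omega> \<in> space M. obsY Z R0 R1 Y0 Y1 \<omega>} {\<omega> \<in> space M. Z \<omega> = z}"

end

theory Submission
  imports Defs
begin

text \<open>Write \<open>h = Pr(AH)\<close> and \<open>a\<^sub>z = Pr(AH, R(z) = 0)\<close>. Randomization and monotonicity
  identify \<open>Pr(R = 0, Y = 1 | Z = z)\<close> with \<open>a\<^sub>z\<close>: given \<open>Z = z\<close> the event is \<open>R(z) = 0, Y(0) = 1\<close>,
  and \<open>Y(0) = 1\<close> forces membership in AH. Likewise \<open>Pr(Y = 1 | Z = z) \<ge> h\<close>, and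
  \<open>APCE\<^sub>A\<^sub>H = ((h - a\<^sub>1) - (h - a\<^sub>0)) / h = (a\<^sub>0 - a\<^sub>1) / h\<close>. Since \<open>max a\<^sub>z \<le> h \<le> min\<^sub>z Pr(Y = 1 | Z = z)\<close>,
  replacing the denominator \<open>h\<close> by either bound gives the two inequalities.\<close>

lemma divide_nonneg_bounds:
  fixes n m h q :: real
  assumes "0 \<le> n" and "0 < m" and "m \<le> h" and "h \<le> q"
  shows "n / q \<le> n / h" and "n / h \<le> n / m"
  using assms by (simp_all add: divide_left_mono)

lemma (in prob_space) APCE_AH_eq:
  assumes [measurable]: "R0 \<in> measurable M (count_space UNIV)" "R1 \<in> measurable M (count_space UNIV)"
    "Y0 \<in> measurable M (count_space UNIV)" "Y1 \<in> measurable M (count_space UNIV)"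
  shows "APCE_AH M R0 R1 Y0 Y1
    = (prob {\<omega> \<in> AH M Y0 Y1. \<not> R0 \<omega>} - prob {\<omega> \<in> AH M Y0 Y1. \<not> R1 \<omega>}) / prob (AH M Y0 Y1)"
proof -
  have [measurable]: "AH M Y0 Y1 \<in> sets M"
    unfolding AH_def by measurable
  have AH_restrict_sets [measurable]: "{\<omega> \<in> AH M Y0 Y1. R \<omega>} \<in> sets M"
    if [measurable]: "R \<in> measurable M (count_space UNIV)" for R
  proof -
    have "{\<omega> \<in> AH M Y0 Y1. R \<omega>} = {\<omega> \<in> space M. Y0 \<omega> \<and> Y1 \<omega> \<and> R \<omega>}"
      by (auto simp: AH_def)
    then show ?thesis
      by simp
  qed
  have prob_split: "prob (AH M Y0 Y1) = prob {\<omega> \<in> AH M Y0 Y1. \<not> R \<omega>} + prob {\<omega> \<in> AH M Y0 Y1. R \<omega>}"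
    if [measurable]: "R \<in> measurable M (count_space UNIV)" for R
  proof -
    have "AH M Y0 Y1 = {\<omega> \<in> AH M Y0 Y1. \<not> R \<omega>} \<union> {\<omega> \<in> AH M Y0 Y1. R \<omega>}"
      by auto
    then show ?thesis
      using finite_measure_Union[of "{\<omega> \<in> AH M Y0 Y1. \<not> R \<omega>}" "{\<omega> \<in> AH M Y0 Y1. R \<omega>}"] by auto
  qed
  have "(\<lambda>\<omega>. (of_bool (R1 \<omega>) - of_bool (R0 \<omega>)) * indicator (AH M Y0 Y1) \<omega>)
      = (\<lambda>\<omega>. indicator {\<omega> \<in> AH M Y0 Y1. R1 \<omega>} \<omega> - indicator {\<omega> \<in> AH M Y0 Y1. R0 \<omega>} \<omega> :: real)"
    by (auto simp: indicator_def)
  then have "(\<integral>\<omega>. (of_bool (R1 \<omega>) - of_bool (R0 \<omega>)) * indicator (AH M Y0 Y1) \<omega> \<partial>M)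
      = prob {\<omega> \<in> AH M Y0 Y1. R1 \<omega>} - prob {\<omega> \<in> AH M Y0 Y1. R0 \<omega>}"
    using AH_restrict_sets[of R0] AH_restrict_sets[of R1]
    by (simp add: Bochner_Integration.integral_diff[OF integrable_real_indicator integrable_real_indicator]
        emeasure_eq_measure)
  then show ?thesis
    unfolding APCE_AH_def cond_exp_event_def using prob_split[of R0] prob_split[of R1] by simp
qed

locale randomized_encouragement = prob_space M for M :: "'a measure" +
  fixes Z R0 R1 Y0 Y1 :: "'a \<Rightarrow> bool"
  assumes measurable_Z [measurable]: "Z \<in> measurable M (count_space UNIV)"
    and measurable_R0 [measurable]: "R0 \<in> measurable M (count_space UNIV)"
    and measurable_R1 [measurable]: "R1 \<in> measurable M (count_space UNIV)"
    and measurable_Y0 [measurable]: "Y0 \<in> measurable M (count_space UNIV)"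
    and measurable_Y1 [measurable]: "Y1 \<in> measurable M (count_space UNIV)"
    and randomization: "\<And>(A :: bool set) (S :: (bool \<times> bool \<times> bool \<times> bool) set).
          prob {\<omega> \<in> space M. Z \<omega> \<in> A \<and> (R0 \<omega>, R1 \<omega>, Y0 \<omega>, Y1 \<omega>) \<in> S}
        = prob {\<omega> \<in> space M. Z \<omega> \<in> A} * prob {\<omega> \<in> space M. (R0 \<omega>, R1 \<omega>, Y0 \<omega>, Y1 \<omega>) \<in> S}"
    and prob_Z_pos: "0 < prob {\<omega> \<in> space M. Z \<omega>}"
    and prob_Z_less_1: "prob {\<omega> \<in> space M. Z \<omega>} < 1"
begin

definition pot_R :: "bool \<Rightarrow> 'a \<Rightarrow> bool" where
  "pot_R z \<omega> = (if z then R1 \<omega> else R0 \<omega>)"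

lemma prob_Z_eq_pos: "0 < prob {\<omega> \<in> space M. Z \<omega> = z}"
proof (cases z)
  case False
  have "{\<omega> \<in> space M. Z \<omega> = False} = space M - {\<omega> \<in> space M. Z \<omega>}"
    by auto
  then show ?thesis
    using False prob_Z_less_1 by (simp add: prob_compl)
qed (use prob_Z_pos in simp)

lemma cond_prob_Z_potential:
  "cond_prob M {\<omega> \<in> space M. f (R0 \<omega>, R1 \<omega>, Y0 \<omega>, Y1 \<omega>)} {\<omega> \<in> space M. Z \<omega> = z}
    = prob {\<omega> \<in> space M. f (R0 \<omega>, R1 \<omega>, Y0 \<omega>, Y1 \<omega>)}"
proof -
  have "prob {\<omega> \<in> space M. Z \<omega> \<in> {z} \<and> (R0 \<omega>, R1 \<omega>, Y0 \<omega>, Y1 \<omega>) \<in> Collect f}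
      = prob {\<omega> \<in> space M. Z \<omega> \<in> {z}} * prob {\<omega> \<in> space M. (R0 \<omega>, R1 \<omega>, Y0 \<omega>, Y1 \<omega>) \<in> Collect f}"
    by (rule randomization)
  moreover have "{\<omega> \<in> space M. f (R0 \<omega>, R1 \<omega>, Y0 \<omega>, Y1 \<omega>)} \<inter> {\<omega> \<in> space M. Z \<omega> = z}
      = {\<omega> \<in> space M. Z \<omega> \<in> {z} \<and> (R0 \<omega>, R1 \<omega>, Y0 \<omega>, Y1 \<omega>) \<in> Collect f}"
    by auto
  ultimately show ?thesis
    using prob_Z_eq_pos[of z] by (simp add: cond_prob_def)
qed

lemma pR0Y1_eq_prob_AH:
  assumes monotonicity: "AE \<omega> in M. Y0 \<omega> \<longrightarrow> Y1 \<omega>"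
  shows "pR0Y1 M Z R0 R1 Y0 Y1 z = prob {\<omega> \<in> AH M Y0 Y1. \<not> pot_R z \<omega>}"
proof -
  let ?f = "\<lambda>(r0, r1, y0, y1). \<not> (if z then r1 else r0) \<and> y0"
  have "{\<omega> \<in> space M. \<not> obsR Z R0 R1 \<omega> \<and> obsY Z R0 R1 Y0 Y1 \<omega>} \<inter> {\<omega> \<in> space M. Z \<omega> = z}
      = {\<omega> \<in> space M. ?f (R0 \<omega>, R1 \<omega>, Y0 \<omega>, Y1 \<omega>)} \<inter> {\<omega> \<in> space M. Z \<omega> = z}"
    by (auto simp: obsR_def obsY_def)
  then have "pR0Y1 M Z R0 R1 Y0 Y1 z
      = cond_prob M {\<omega> \<in> space M. ?f (R0 \<omega>, R1 \<omega>, Y0 \<omega>, Y1 \<omega>)} {\<omega> \<in> space M. Z \<omega> = z}"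
    unfolding pR0Y1_def cond_prob_def by (simp only:)
  also have "\<dots> = prob {\<omega> \<in> space M. \<not> pot_R z \<omega> \<and> Y0 \<omega>}"
    unfolding cond_prob_Z_potential by (simp add: pot_R_def)
  also have "\<dots> = prob {\<omega> \<in> AH M Y0 Y1. \<not> pot_R z \<omega>}"
    unfolding AH_def pot_R_def by (rule measure_eq_AE) (use monotonicity in auto)
  finally show ?thesis .
qed

lemma prob_AH_le_pY1: "prob (AH M Y0 Y1) \<le> pY1 M Z R0 R1 Y0 Y1 z"
proof -
  let ?f = "\<lambda>(r0, r1, y0, y1). if (if z then r1 else r0) then y1 else y0"
  have "{\<omega> \<in> space M. obsY Z R0 R1 Y0 Y1 \<omega>} \<inter> {\<omega> \<in> space M. Z \<omega> = z}
      = {\<omega> \<in> space M. ?f (R0 \<omega>, R1 \<omega>, Y0 \<omega>, Y1 \<omega>)} \<inter> {\<omega> \<in> space M. Z \<omega> = z}"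
    by (auto simp: obsR_def obsY_def)
  then have "pY1 M Z R0 R1 Y0 Y1 z
      = cond_prob M {\<omega> \<in> space M. ?f (R0 \<omega>, R1 \<omega>, Y0 \<omega>, Y1 \<omega>)} {\<omega> \<in> space M. Z \<omega> = z}"
    unfolding pY1_def cond_prob_def by (simp only:)
  also have "\<dots> = prob {\<omega> \<in> space M. ?f (R0 \<omega>, R1 \<omega>, Y0 \<omega>, Y1 \<omega>)}"
    by (rule cond_prob_Z_potential)
  also have "prob (AH M Y0 Y1) \<le> \<dots>"
    unfolding AH_def by (rule finite_measure_mono) auto
  finally show ?thesis .
qed

end

theorem mainTheorem7:
  fixes M :: "'a measure"
    and Z R0 R1 Y0 Y1 :: "'a \<Rightarrow> bool"
  assumes "prob_space M"
    and meas_Z: "Z \<in> measurable M (count_space UNIV)"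
    and meas_R0: "R0 \<in> measurable M (count_space UNIV)"
    and meas_R1: "R1 \<in> measurable M (count_space UNIV)"
    and meas_Y0: "Y0 \<in> measurable M (count_space UNIV)"
    and meas_Y1: "Y1 \<in> measurable M (count_space UNIV)"
    and randomization: "\<And>(A :: bool set) (S :: (bool \<times> bool \<times> bool \<times> bool) set).
          measure M {\<omega> \<in> space M. Z \<omega> \<in> A \<and> (R0 \<omega>, R1 \<omega>, Y0 \<omega>, Y1 \<omega>) \<in> S}
        = measure M {\<omega> \<in> space M. Z \<omega> \<in> A}
          * measure M {\<omega> \<in> space M. (R0 \<omega>, R1 \<omega>, Y0 \<omega>, Y1 \<omega>) \<in> S}"
    and Z_pos: "0 < measure M {\<omega> \<in> space M. Z \<omega>}"
    and Z_lt1: "measure M {\<omega> \<in> space M. Z \<omega>} < 1"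
    and monotonicity: "AE \<omega> in M. Y0 \<omega> \<longrightarrow> Y1 \<omega>"
    and N_nonneg: "pR0Y1 M Z R0 R1 Y0 Y1 False - pR0Y1 M Z R0 R1 Y0 Y1 True \<ge> 0"
    and max_pos: "max (pR0Y1 M Z R0 R1 Y0 Y1 False) (pR0Y1 M Z R0 R1 Y0 Y1 True) > 0"
  shows "(pR0Y1 M Z R0 R1 Y0 Y1 False - pR0Y1 M Z R0 R1 Y0 Y1 True)
           / min (pY1 M Z R0 R1 Y0 Y1 False) (pY1 M Z R0 R1 Y0 Y1 True)
           \<le> APCE_AH M R0 R1 Y0 Y1
       \<and> APCE_AH M R0 R1 Y0 Y1
           \<le> (pR0Y1 M Z R0 R1 Y0 Y1 False - pR0Y1 M Z R0 R1 Y0 Y1 True)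
             / max (pR0Y1 M Z R0 R1 Y0 Y1 False) (pR0Y1 M Z R0 R1 Y0 Y1 True)"
proof -
  interpret prob_space M by fact
  interpret randomized_encouragement M Z R0 R1 Y0 Y1
    by unfold_locales (fact meas_Z meas_R0 meas_R1 meas_Y0 meas_Y1 randomization Z_pos Z_lt1)+
  let ?a = "pR0Y1 M Z R0 R1 Y0 Y1" and ?h = "prob (AH M Y0 Y1)"
  have a_eq: "?a z = prob {\<omega> \<in> AH M Y0 Y1. \<not> pot_R z \<omega>}" for z
    using pR0Y1_eq_prob_AH[OF monotonicity] .
  have "?a z \<le> ?h" for z
    unfolding a_eq AH_def by (rule finite_measure_mono) auto
  then have max_le: "max (?a False) (?a True) \<le> ?h"
    by simp
  have APCE: "APCE_AH M R0 R1 Y0 Y1 = (?a False - ?a True) / ?h"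
    unfolding APCE_AH_eq[OF meas_R0 meas_R1 meas_Y0 meas_Y1] a_eq by (simp add: pot_R_def)
  have "?h \<le> min (pY1 M Z R0 R1 Y0 Y1 False) (pY1 M Z R0 R1 Y0 Y1 True)"
    using prob_AH_le_pY1 by simp
  then show ?thesis
    unfolding APCE using divide_nonneg_bounds[OF N_nonneg max_pos max_le] by blast
qed

end
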